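(* Let $\mathcal{R}=(W,\unlhd)$ be a poset regarded as a category and consider the presheaf topos $\mathbf{Set}^{\mathcal{R}}$, whose subobject classifier satisfies $\Omega(w)=\{A\cap\uparrow\! w\mid A\subseteq W\text{ upward closed}\}$ with $\uparrow\! w=\{v\mid w\unlhd v\}$. Let $\odot:\Omega\to\Omega$ be the interpretation of $p{:}\Omega\vdash\divideontimes p{:}\Omega$, where $\divideontimes p:=\forall t{:}\Omega.(t\vee(t\Rightarrow p))$. Then for every $w\in W$ and every $A\in\Omega(w)$, $$\odot_w(A)=\{z\in W\mid w\unlhd z\text{ and }\uparrow\! z\setminus\{z\}\subseteq A\}.$$
   Context: $\mathbf{Set}^{\mathcal{R}}$ denotes covariant functors from $\mathcal{R}$ to $\mathbf{Set}$; $\divideontimes$ is expressed in the Mitchell–Bénabou internal language of the topos. *)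

theory Defs
  imports Main
begin

definition is_poset :: "('w \<Rightarrow> 'w \<Rightarrow> bool) \<Rightarrow> bool" where
  "is_poset le \<longleftrightarrow> reflp le \<and> transp le \<and> antisymp le"

definition up :: "('w \<Rightarrow> 'w \<Rightarrow> bool) \<Rightarrow> 'w \<Rightarrow> 'w set" where
  "up le w = {v. le w v}"

definition upclosed :: "('w \<Rightarrow> 'w \<Rightarrow> bool) \<Rightarrow> 'w set \<Rightarrow> bool" where
  "upclosed le A \<longleftrightarrow> (\<forall>x y. x \<in> A \<longrightarrow> le x y \<longrightarrow> y \<in> A)"

text \<open>Subobject classifier of Set^R: Omega(w) = {A \<inter> \<up>w | A upward closed};
  restriction along w \<unlhd> v is intersection with \<up>v.\<close>

definition Omega :: "('w \<Rightarrow> 'w \<Rightarrow> bool) \<Rightarrow> 'w \<Rightarrow> 'w set set" where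
  "Omega le w = {A \<inter> up le w | A. upclosed le A}"

text \<open>The fragment of the Mitchell--Benabou language needed: formulas built from
  variables of type Omega (regarded as formulas), disjunction, implication and universal
  quantification over Omega.\<close>

datatype form = OVar nat | Disj form form | Impl form form | AllO nat form

text \<open>Kripke--Joyal forcing in the presheaf topos Set^R; an environment assigns to each
  variable an element of Omega at the current stage.\<close>

fun forces :: "('w \<Rightarrow> 'w \<Rightarrow> bool) \<Rightarrow> 'w \<Rightarrow> (nat \<Rightarrow> 'w set) \<Rightarrow> form \<Rightarrow> bool" where
  "forces le w env (OVar i) = (w \<in> env i)"
| "forces le w env (Disj \<phi> \<psi>) = (forces le w env \<phi> \<or> forces le w env \<psi>)"
| "forces le w env (Impl \<phi> \<psi>) =
     (\<forall>v. le w v \<longrightarrow> forces le v (\<lambda>i. env i \<inter> up le v) \<phi>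
                      \<longrightarrow> forces le v (\<lambda>i. env i \<inter> up le v) \<psi>)"
| "forces le w env (AllO j \<phi>) =
     (\<forall>v. le w v \<longrightarrow> (\<forall>T \<in> Omega le v. forces le v ((\<lambda>i. env i \<inter> up le v)(j := T)) \<phi>))"

text \<open>Interpretation of a formula p:Omega |- phi : Omega (free variable p = variable 0)
  as a natural transformation Omega \<rightarrow> Omega: at stage w it sends A \<in> Omega(w) to the
  sieve of stages z \<unrhd> w at which phi is forced with p := A restricted to z.\<close>

definition interp :: "('w \<Rightarrow> 'w \<Rightarrow> bool) \<Rightarrow> form \<Rightarrow> 'w \<Rightarrow> 'w set \<Rightarrow> 'w set" where
  "interp le \<phi> w A = {z. le w z \<and> forces le z (\<lambda>_. A \<inter> up le z) \<phi>}"

text \<open>divideontimes p := \<forall>t:Omega. (t \<or> (t \<Rightarrow> p)), with p = variable 0, t = variable 1.\<close>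

definition divstar :: form where
  "divstar = AllO 1 (Disj (OVar 1) (Impl (OVar 1) (OVar 0)))"

definition odot :: "('w \<Rightarrow> 'w \<Rightarrow> bool) \<Rightarrow> 'w \<Rightarrow> 'w set \<Rightarrow> 'w set" where
  "odot le w A = interp le divstar w A"

end

theory Submission
  imports Defs
begin

text \<open>Forcing \<open>\<forall>t. t \<or> (t \<Rightarrow> p)\<close> at \<open>z\<close> says: whenever a sieve \<open>T\<close> on some
  \<open>v \<unrhd> z\<close> fails at \<open>v\<close>, all points of \<open>T\<close> lie in \<open>A\<close>.  The principal sieve of a point \<open>y\<close>
  strictly above \<open>z\<close> fails at \<open>z\<close>, which puts \<open>y\<close> into \<open>A\<close>.  Conversely, a point of a sieve
  on \<open>v\<close> that fails at \<open>v\<close> differs from \<open>v\<close>, hence by antisymmetry from \<open>z\<close>, so it lies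
  strictly above \<open>z\<close>.\<close>

lemma upclosed_up: "transp le \<Longrightarrow> upclosed le (up le y)"
  unfolding upclosed_def up_def by (metis mem_Collect_eq transpD)

lemma up_Int_up_in_Omega:
  assumes "transp le"
  shows "up le y \<inter> up le z \<in> Omega le z"
  unfolding Omega_def using upclosed_up[OF assms] by blast

lemma forces_divstar_iff:
  assumes "reflp le" and "transp le"
  shows "forces le z (\<lambda>_. A \<inter> up le z) divstar \<longleftrightarrow>
    (\<forall>v T. le z v \<longrightarrow> T \<in> Omega le v \<longrightarrow> v \<in> T \<or> (\<forall>u. le v u \<longrightarrow> u \<in> T \<longrightarrow> u \<in> A))"
proof -
  have refl: "le x x" for x
    using assms(1) by (rule reflpD)
  have trans: "le x z'" if "le x y" and "le y z'" for x y z'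
    using assms(2) that by (rule transpD)
  show ?thesis
    unfolding divstar_def by (simp add: up_def refl) (blast intro: trans)
qed

lemma forces_divstar_iff_strict_up_subset:
  assumes "is_poset le"
  shows "forces le z (\<lambda>_. A \<inter> up le z) divstar \<longleftrightarrow> up le z - {z} \<subseteq> A"
proof -
  have refl: "reflp le" and trans: "transp le" and antisym: "antisymp le"
    using assms unfolding is_poset_def by auto
  show ?thesis
    unfolding forces_divstar_iff[OF refl trans]
  proof (intro iffI subsetI allI impI)
    fix y
    assume forced: "\<forall>v T. le z v \<longrightarrow> T \<in> Omega le v \<longrightarrow> v \<in> T \<or> (\<forall>u. le v u \<longrightarrow> u \<in> T \<longrightarrow> u \<in> A)"
      and "y \<in> up le z - {z}"
    then have "le z y" and "y \<noteq> z"
      by (auto simp: up_def)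
    let ?T = "up le y \<inter> up le z"
    have "?T \<in> Omega le z"
      using trans by (rule up_Int_up_in_Omega)
    moreover have "z \<notin> ?T"
      using \<open>le z y\<close> \<open>y \<noteq> z\<close> antisym by (auto simp: up_def dest: antisympD)
    moreover have "y \<in> ?T" and "le z z"
      using \<open>le z y\<close> refl by (auto simp: up_def dest: reflpD)
    ultimately show "y \<in> A"
      using forced \<open>le z y\<close> by blast
  next
    fix v T
    assume strict_up: "up le z - {z} \<subseteq> A" and "le z v"
    have "u \<in> A" if "v \<notin> T" and "le v u" and "u \<in> T" for u
    proof -
      have "u \<noteq> v"
        using that by blast
      moreover have "le z u"
        using trans \<open>le z v\<close> \<open>le v u\<close> by (rule transpD)
      ultimately have "u \<noteq> z"
        using antisym \<open>le z v\<close> \<open>le v u\<close> by (auto dest: antisympD)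
      then show "u \<in> A"
        using strict_up \<open>le z u\<close> by (auto simp: up_def)
    qed
    then show "v \<in> T \<or> (\<forall>u. le v u \<longrightarrow> u \<in> T \<longrightarrow> u \<in> A)"
      by blast
  qed
qed

theorem fact5p14:
  fixes le :: "'w \<Rightarrow> 'w \<Rightarrow> bool"
  assumes "is_poset le"
    and "A \<in> Omega le w"
  shows "odot le w A = {z. le w z \<and> up le z - {z} \<subseteq> A}"
  unfolding odot_def interp_def
  using forces_divstar_iff_strict_up_subset[OF assms(1)] by simp

end
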